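(* If the $n$th order ODE $x_n=F(t,x,x_1,\ldots,x_{n-1})$ is invariant under a telescopic vector field $\tau^{(n)}=\alpha\partial_t+\beta\partial_x+\sum_{i=1}^n\gamma^{(i)}\partial_{x_i}$ (i.e. $\tau^{(n)}$ is tangent to the submanifold $\{x_n=F\}$), then the vector field $\mathbf{X}=\partial_x$ is a generalized $\lambda$-symmetry of the equation for the function $\lambda=\frac{\gamma^{(1)}-\alpha x_2}{\beta-\alpha x_1}\in C^\infty(M^{(2)})$, i.e. $\mathbf{X}^{[\lambda,(n)]}$ is tangent to $\{x_n=F\}$.
   Context: Jet coordinates $(t,x,x_1,x_2,\ldots)$ on $M^{(k)}$, $x_i=d^ix/dt^i$; $D_t$ the total derivative. A telescopic vector field is $\tau^{(k)}=\alpha(t,x,x_1)\partial_t+\beta(t,x,x_1)\partial_x+\sum_{i=1}^k\gamma^{(i)}\partial_{x_i}$ with $\alpha,\beta,\gamma^{(1)}$ arbitrary smooth functions of $(t,x,x_1)$, $\beta-\alpha x_1\neq 0$, and for $2\le i\le k$: $\gamma^{(i)}=D_t(\gamma^{(i-1)})-D_t(\alpha)x_i+\frac{\gamma^{(1)}+x_1D_t\alpha-D_t\beta}{\beta-x_1\alpha}(\gamma^{(i-1)}-\alpha x_i)$. For a function $\lambda$ depending on finitely many jet variables and $\mathbf{X}=\rho(t,x)\partial_t+\phi^0(t,x)\partial_x$, the (generalized) $\lambda$-prolongation is $\mathbf{X}^{[\lambda,(k)]}=\rho\partial_t+\phi^0\partial_x+\sum_{i=1}^k\phi^{[\lambda,(i)]}\partial_{x_i}$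 with $\phi^{[\lambda,(0)]}=\phi^0$, $\phi^{[\lambda,(i)]}=D_t(\phi^{[\lambda,(i-1)]})-D_t(\rho)x_i+\lambda(\phi^{[\lambda,(i-1)]}-\rho x_i)$. *)

theory Defs
  imports "HOL-Analysis.Analysis"
begin

text \<open>A point of the jet space is a pair (t, u) with u 0 = x and u i = x_i.
  Functions on the jet space are functions of t and u (depending on finitely many u i).\<close>

type_synonym jfun = "real \<Rightarrow> (nat \<Rightarrow> real) \<Rightarrow> real"

definition depends_upto :: "nat \<Rightarrow> jfun \<Rightarrow> bool" where
  "depends_upto N f \<longleftrightarrow> (\<forall>t u v. (\<forall>i\<le>N. u i = v i) \<longrightarrow> f t u = f t v)"

definition pt :: "jfun \<Rightarrow> jfun" where
  "pt f = (\<lambda>t u. deriv (\<lambda>s. f s u) t)"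

definition px :: "nat \<Rightarrow> jfun \<Rightarrow> jfun" where
  "px i f = (\<lambda>t u. deriv (\<lambda>s. f t (u(i := s))) (u i))"

definition Dt :: "jfun \<Rightarrow> jfun" where
  "Dt f = (\<lambda>t u. pt f t u + (\<Sum>i. u (Suc i) * px i f t u))"

text \<open>Smoothness: jointly continuous, all first partial derivatives exist and are again smooth
  (so all iterated partial derivatives exist and are continuous).\<close>
coinductive jsmooth :: "jfun \<Rightarrow> bool" where
  "\<lbrakk> continuous_on UNIV (\<lambda>p. f (fst p) (snd p));
     \<forall>t u. (\<lambda>s. f s u) differentiable (at t);
     \<forall>i t u. (\<lambda>s. f t (u(i := s))) differentiable (at (u i));
     jsmooth (pt f);
     \<forall>i. jsmooth (px i f) \<rbrakk> \<Longrightarrow> jsmooth f"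

definition lift3 :: "(real \<Rightarrow> real \<Rightarrow> real \<Rightarrow> real) \<Rightarrow> jfun" where
  "lift3 g = (\<lambda>t u. g t (u 0) (u 1))"

text \<open>Coefficients of the telescopic vector field: index 0 gives beta (coefficient of d_x),
  index i \<ge> 1 gives gamma^(i).\<close>
fun tele :: "jfun \<Rightarrow> jfun \<Rightarrow> jfun \<Rightarrow> nat \<Rightarrow> jfun" where
  "tele a b g1 0 = b"
| "tele a b g1 (Suc 0) = g1"
| "tele a b g1 (Suc (Suc k)) = (\<lambda>t u.
      Dt (tele a b g1 (Suc k)) t u - Dt a t u * u (Suc (Suc k))
      + (g1 t u + u 1 * Dt a t u - Dt b t u) / (b t u - u 1 * a t u)
        * (tele a b g1 (Suc k) t u - a t u * u (Suc (Suc k))))"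

fun lprol :: "jfun \<Rightarrow> jfun \<Rightarrow> jfun \<Rightarrow> nat \<Rightarrow> jfun" where
  "lprol rho phi0 lam 0 = phi0"
| "lprol rho phi0 lam (Suc i) = (\<lambda>t u.
      Dt (lprol rho phi0 lam i) t u - Dt rho t u * u (Suc i)
      + lam t u * (lprol rho phi0 lam i t u - rho t u * u (Suc i)))"

definition annihilates_on :: "nat \<Rightarrow> jfun \<Rightarrow> jfun \<Rightarrow> (nat \<Rightarrow> jfun)
    \<Rightarrow> (real \<times> (nat \<Rightarrow> real)) set \<Rightarrow> bool" where
  "annihilates_on n F a b S \<longleftrightarrow>
     (\<forall>(t, u) \<in> S. b n t u = a t u * pt F t u + (\<Sum>i<n. b i t u * px i F t u))"

definition eq_surface :: "nat \<Rightarrow> jfun \<Rightarrow> (real \<times> (nat \<Rightarrow> real)) set" where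
  "eq_surface n F = {(t, u). u n = F t u}"

text \<open>The equation together with its first differential consequence x_{n+1} = D_t F.\<close>
definition eq_surface_prol :: "nat \<Rightarrow> jfun \<Rightarrow> (real \<times> (nat \<Rightarrow> real)) set" where
  "eq_surface_prol n F = {(t, u). u n = F t u \<and> u (Suc n) = Dt F t u}"

end

theory Submission
  imports Defs
begin

text \<open>Write \<open>Q = \<beta> - \<alpha> x\<^sub>1\<close> and \<open>\<phi>\<^sub>k\<close> for the coefficients of the
  \<open>\<lambda>\<close>-prolongation of \<open>\<partial>\<^sub>x\<close>. Since \<open>D\<^sub>t\<close> is a derivation, induction on \<open>k\<close> gives the
  factorisation \<open>\<gamma>\<^sub>k = Q \<phi>\<^sub>k + \<alpha> x\<^sub>k\<^sub>+\<^sub>1\<close> of the telescopic coefficients: the choice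
  \<open>\<lambda> = (\<gamma>\<^sub>1 - \<alpha> x\<^sub>2) / Q\<close> is exactly what makes the correction term in the recursion
  for \<open>\<gamma>\<^sub>k\<^sub>+\<^sub>1\<close> absorb \<open>D\<^sub>t Q\<close>. Substituting the factorisation into the tangency
  condition of \<open>\<tau>\<close> and using \<open>x\<^sub>n\<^sub>+\<^sub>1 = D\<^sub>t F\<close>, the \<open>\<alpha>\<close>-terms cancel and
  \<open>Q\<close> times the tangency condition of the \<open>\<lambda>\<close>-prolongation remains; as \<open>Q \<noteq> 0\<close>, it holds.\<close>

lemma field_differentiable_of_real_differentiable [simp]:
  "(f :: real \<Rightarrow> real) differentiable at x \<Longrightarrow> f field_differentiable at x"
  by (simp add: DERIV_deriv_iff_real_differentiable flip: DERIV_deriv_iff_field_differentiable)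

definition partially_differentiable :: "jfun \<Rightarrow> bool" where
  "partially_differentiable f \<longleftrightarrow>
     (\<forall>t u. (\<lambda>s. f s u) differentiable at t) \<and>
     (\<forall>i t u. (\<lambda>s. f t (u(i := s))) differentiable at (u i))"

lemma
  assumes f: "partially_differentiable f" and g: "partially_differentiable g"
  shows partially_differentiable_add: "partially_differentiable (\<lambda>t u. f t u + g t u)"
    and partially_differentiable_diff: "partially_differentiable (\<lambda>t u. f t u - g t u)"
    and partially_differentiable_mult: "partially_differentiable (\<lambda>t u. f t u * g t u)"
    and pt_add: "pt (\<lambda>t u. f t u + g t u) = (\<lambda>t u. pt f t u + pt g t u)"
    and px_add: "px i (\<lambda>t u. f t u + g t u) = (\<lambda>t u. px i f t u + px i g t u)"
    and pt_diff: "pt (\<lambda>t u. f t u - g t u) = (\<lambda>t u. pt f t u - pt g t u)"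
    and px_diff: "px i (\<lambda>t u. f t u - g t u) = (\<lambda>t u. px i f t u - px i g t u)"
    and pt_mult: "pt (\<lambda>t u. f t u * g t u) = (\<lambda>t u. pt f t u * g t u + f t u * pt g t u)"
    and px_mult: "px i (\<lambda>t u. f t u * g t u) = (\<lambda>t u. px i f t u * g t u + f t u * px i g t u)"
  using assms by (auto simp: partially_differentiable_def pt_def px_def algebra_simps intro!: ext)

lemma
  assumes f: "partially_differentiable f" and g: "partially_differentiable g"
    and nz: "\<And>t u. g t u \<noteq> 0"
  shows partially_differentiable_divide: "partially_differentiable (\<lambda>t u. f t u / g t u)"
    and pt_divide: "pt (\<lambda>t u. f t u / g t u)
                     = (\<lambda>t u. (pt f t u * g t u - f t u * pt g t u) / (g t u * g t u))"
    and px_divide: "px i (\<lambda>t u. f t u / g t u)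
                     = (\<lambda>t u. (px i f t u * g t u - f t u * px i g t u) / (g t u * g t u))"
  using assms by (auto simp: partially_differentiable_def pt_def px_def power2_eq_square intro!: ext)

definition finite_order :: "jfun \<Rightarrow> bool" where
  "finite_order f \<longleftrightarrow> (\<exists>N. depends_upto N f)"

lemma depends_upto_mono: "depends_upto N f \<Longrightarrow> N \<le> M \<Longrightarrow> depends_upto M f"
  unfolding depends_upto_def by auto

lemma finite_order_common:
  assumes "finite_order f" "finite_order g"
  obtains N where "depends_upto N f" "depends_upto N g"
proof -
  obtain N M where "depends_upto N f" "depends_upto M g"
    using assms unfolding finite_order_def by auto
  then show ?thesis
    using that depends_upto_mono[of N f "max N M"] depends_upto_mono[of M g "max N M"] by simp
qed

lemma finite_order_binop:
  assumes "finite_order f" "finite_order g"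
  shows "finite_order (\<lambda>t u. h (f t u) (g t u))"
  using finite_order_common[OF assms] unfolding finite_order_def depends_upto_def by metis

lemma depends_upto_fun_upd_beyond:
  assumes "depends_upto N f" "N < i"
  shows "f t (u(i := s)) = f t u"
  using assms unfolding depends_upto_def by auto

lemma depends_upto_pt: "depends_upto N f \<Longrightarrow> depends_upto N (pt f)"
  unfolding depends_upto_def pt_def by (metis (no_types, lifting) ext)

lemma depends_upto_px:
  assumes f: "depends_upto N f"
  shows "depends_upto N (px i f)"
  unfolding depends_upto_def
proof (intro allI impI)
  fix t :: real and u v :: "nat \<Rightarrow> real" assume uv: "\<forall>j\<le>N. u j = v j"
  show "px i f t u = px i f t v"
  proof (cases "i \<le> N")
    case True
    then have "(\<lambda>s. f t (u(i := s))) = (\<lambda>s. f t (v(i := s)))" "u i = v i"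
      using f uv unfolding depends_upto_def by auto
    then show ?thesis unfolding px_def by simp
  next
    case False
    then show ?thesis
      unfolding px_def using depends_upto_fun_upd_beyond[OF f] by simp
  qed
qed

lemma px_eq_0_beyond: "depends_upto N f \<Longrightarrow> N < i \<Longrightarrow> px i f t u = 0"
  unfolding px_def by (simp add: depends_upto_fun_upd_beyond)

lemma Dt_eq_finite_sum:
  assumes "depends_upto N f" "N < M"
  shows "Dt f t u = pt f t u + (\<Sum>i<M. u (Suc i) * px i f t u)"
proof -
  have "(\<Sum>i. u (Suc i) * px i f t u) = (\<Sum>i<M. u (Suc i) * px i f t u)"
    by (rule suminf_finite) (use assms px_eq_0_beyond in auto)
  then show ?thesis unfolding Dt_def by simp
qed

lemma pt_const [simp]: "pt (\<lambda>t u. c) = (\<lambda>t u. 0)"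
  unfolding pt_def by simp

lemma px_const [simp]: "px i (\<lambda>t u. c) = (\<lambda>t u. 0)"
  unfolding px_def by simp

lemma pt_coord [simp]: "pt (\<lambda>t u. u k) = (\<lambda>t u. 0)"
  unfolding pt_def by simp

lemma px_coord [simp]: "px i (\<lambda>t u. u k) = (\<lambda>t u. if i = k then 1 else 0)"
  unfolding px_def by auto

lemma Dt_const [simp]: "Dt (\<lambda>t u. c) = (\<lambda>t u. 0)"
  unfolding Dt_def by simp

lemma Dt_coord [simp]: "Dt (\<lambda>t u. u k) t u = u (Suc k)"
proof -
  have "depends_upto k (\<lambda>t u. u k)" unfolding depends_upto_def by simp
  then have "Dt (\<lambda>t u. u k) t u = (\<Sum>i<Suc k. u (Suc i) * (if i = k then 1 else 0))"
    by (simp add: Dt_eq_finite_sum[OF _ lessI])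
  then show ?thesis by (simp add: if_distrib)
qed

text \<open>\<open>Dt\<close> is a derivation only on functions of finite order with partial derivatives (otherwise
  \<open>deriv\<close> and the series in its definition take junk values); \<open>jet_alg\<close> is a class of such
  functions that is closed under \<open>pt\<close>, \<open>px\<close>, \<open>Dt\<close> and the field operations.\<close>

inductive jet_alg :: "jfun \<Rightarrow> bool" where
  smooth: "jsmooth f \<Longrightarrow> depends_upto N f \<Longrightarrow> jet_alg f"
| const: "jet_alg (\<lambda>t u. c)"
| coord: "jet_alg (\<lambda>t u. u k)"
| add: "jet_alg f \<Longrightarrow> jet_alg g \<Longrightarrow> jet_alg (\<lambda>t u. f t u + g t u)"
| diff: "jet_alg f \<Longrightarrow> jet_alg g \<Longrightarrow> jet_alg (\<lambda>t u. f t u - g t u)"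
| mult: "jet_alg f \<Longrightarrow> jet_alg g \<Longrightarrow> jet_alg (\<lambda>t u. f t u * g t u)"
| divide: "jet_alg f \<Longrightarrow> jet_alg g \<Longrightarrow> (\<And>t u. g t u \<noteq> 0) \<Longrightarrow> jet_alg (\<lambda>t u. f t u / g t u)"

lemma jet_alg_partials:
  assumes "jet_alg f"
  shows "finite_order f \<and> partially_differentiable f \<and> jet_alg (pt f) \<and> (\<forall>i. jet_alg (px i f))"
  using assms
proof (induction rule: jet_alg.induct)
  case (smooth f N)
  then have "jsmooth (pt f)" "jsmooth (px i f)" "partially_differentiable f" for i
    by (auto simp: partially_differentiable_def elim: jsmooth.cases)
  with smooth.hyps(2) show ?case
    by (auto simp: finite_order_def intro: jet_alg.smooth depends_upto_pt depends_upto_px)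
next
  case (const c)
  show ?case
    by (auto simp: finite_order_def depends_upto_def partially_differentiable_def intro: jet_alg.const)
next
  case (coord k)
  have "(\<lambda>s. (u(i := s)) k) differentiable at x" for i and u :: "nat \<Rightarrow> real" and x
    by (cases "i = k") simp_all
  then have "partially_differentiable (\<lambda>t u. u k)"
    unfolding partially_differentiable_def by simp
  moreover have "finite_order (\<lambda>t u. u k)"
    unfolding finite_order_def depends_upto_def by (meson order_refl)
  ultimately show ?case by (auto intro: jet_alg.const)
next
  case (add f g)
  then show ?case
    by (simp add: finite_order_binop partially_differentiable_add pt_add px_add jet_alg.add)
next
  case (diff f g)
  then show ?case
    by (simp add: finite_order_binop partially_differentiable_diff pt_diff px_diff jet_alg.diff)
next
  case (mult f g)
  then show ?case
    by (simp add: finite_order_binop partially_differentiable_mult pt_mult px_mult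
        jet_alg.add jet_alg.mult)
next
  case (divide f g)
  then show ?case
    by (simp add: finite_order_binop partially_differentiable_divide pt_divide px_divide
        jet_alg.diff jet_alg.mult jet_alg.divide)
qed

lemma
  assumes f: "jet_alg f" and g: "jet_alg g"
  shows Dt_add: "Dt (\<lambda>t u. f t u + g t u) t u = Dt f t u + Dt g t u"
    and Dt_diff: "Dt (\<lambda>t u. f t u - g t u) t u = Dt f t u - Dt g t u"
    and Dt_mult: "Dt (\<lambda>t u. f t u * g t u) t u = Dt f t u * g t u + f t u * Dt g t u"
proof -
  obtain N where N: "depends_upto N f" "depends_upto N g"
    using finite_order_common jet_alg_partials f g by blast
  then have "depends_upto N (\<lambda>t u. h (f t u) (g t u))" for h :: "real \<Rightarrow> real \<Rightarrow> real"
    unfolding depends_upto_def by metis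
  note Dt_sums = Dt_eq_finite_sum[OF this lessI] Dt_eq_finite_sum[OF N(1) lessI]
    Dt_eq_finite_sum[OF N(2) lessI]
  have pd: "partially_differentiable f" "partially_differentiable g"
    using f g jet_alg_partials by blast+
  show "Dt (\<lambda>t u. f t u + g t u) t u = Dt f t u + Dt g t u"
    unfolding Dt_sums by (simp add: pd pt_add px_add sum.distrib algebra_simps)
  show "Dt (\<lambda>t u. f t u - g t u) t u = Dt f t u - Dt g t u"
    unfolding Dt_sums by (simp add: pd pt_diff px_diff sum_subtractf algebra_simps)
  show "Dt (\<lambda>t u. f t u * g t u) t u = Dt f t u * g t u + f t u * Dt g t u"
    unfolding Dt_sums
    by (simp add: pd pt_mult px_mult sum.distrib sum_distrib_left sum_distrib_right algebra_simps)
qed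

lemma jet_alg_sum:
  fixes M :: nat
  shows "(\<And>i. jet_alg (h i)) \<Longrightarrow> jet_alg (\<lambda>t u. \<Sum>i<M. h i t u)"
  by (induction M) (simp_all add: jet_alg.const jet_alg.add)

lemma jet_alg_Dt:
  assumes "jet_alg f"
  shows "jet_alg (Dt f)"
proof -
  obtain N where N: "depends_upto N f"
    using assms jet_alg_partials unfolding finite_order_def by blast
  have "Dt f = (\<lambda>t u. pt f t u + (\<Sum>i<Suc N. u (Suc i) * px i f t u))"
    using Dt_eq_finite_sum[OF N lessI] by blast
  moreover have "jet_alg (\<lambda>t u. pt f t u + (\<Sum>i<Suc N. u (Suc i) * px i f t u))"
    using jet_alg_partials[OF assms]
    by (intro jet_alg.add jet_alg_sum jet_alg.mult jet_alg.coord) auto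
  ultimately show ?thesis by simp
qed

lemma jet_alg_lprol:
  assumes "jet_alg rho" "jet_alg phi0" "jet_alg lam"
  shows "jet_alg (lprol rho phi0 lam k)"
  by (induction k)
    (simp_all add: assms jet_alg.add jet_alg.diff jet_alg.mult jet_alg.coord jet_alg_Dt)

lemma tele_eq_lprol:
  fixes A B G :: jfun
  defines "Q \<equiv> \<lambda>t u. B t u - A t u * u 1"
    and "lam \<equiv> \<lambda>t u. (G t u - A t u * u 2) / (B t u - A t u * u 1)"
  assumes A: "jet_alg A" and B: "jet_alg B" and G: "jet_alg G"
    and nz: "\<And>t u. Q t u \<noteq> 0"
  shows "tele A B G k
           = (\<lambda>t u. Q t u * lprol (\<lambda>t u. 0) (\<lambda>t u. 1) lam k t u + A t u * u (Suc k))"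
proof -
  define P where "P = lprol (\<lambda>t u. 0) (\<lambda>t u. 1) lam"
  have Q: "jet_alg Q"
    unfolding Q_def by (intro jet_alg.diff jet_alg.mult A B jet_alg.coord)
  have lam_eq: "lam = (\<lambda>t u. (G t u - A t u * u 2) / Q t u)"
    unfolding lam_def Q_def ..
  have "jet_alg lam"
    unfolding lam_eq by (intro jet_alg.divide jet_alg.diff jet_alg.mult A G Q jet_alg.coord nz)
  then have P: "jet_alg (P k)" for k
    unfolding P_def by (intro jet_alg_lprol jet_alg.const)
  have P_Suc: "P (Suc k) t u = Dt (P k) t u + lam t u * P k t u" for k t u
    unfolding P_def by simp
  have den: "B t u - u 1 * A t u = Q t u" for t u
    unfolding Q_def by simp
  have "tele A B G k = (\<lambda>t u. Q t u * P k t u + A t u * u (Suc k))"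
  proof (induction k rule: induct_nat_012)
    case 0
    show ?case unfolding P_def Q_def by simp
  next
    case 1
    show ?case using nz unfolding P_def lam_eq by (simp add: numeral_2_eq_2)
  next
    case (ge2 k)
    have IH: "tele A B G (Suc k) = (\<lambda>t u. Q t u * P (Suc k) t u + A t u * u (Suc (Suc k)))"
      by (fact ge2.IH(2))
    have DtQ: "Dt Q t u = Dt B t u - (Dt A t u * u 1 + A t u * u 2)" for t u
      unfolding Q_def by (simp add: Dt_diff Dt_mult A B jet_alg.mult jet_alg.coord numeral_2_eq_2)
    have DtT: "Dt (tele A B G (Suc k)) t u = Dt Q t u * P (Suc k) t u + Q t u * Dt (P (Suc k)) t u
                 + Dt A t u * u (Suc (Suc k)) + A t u * u (Suc (Suc (Suc k)))" for t u
      unfolding IH by (simp add: Dt_add Dt_mult A Q P jet_alg.mult jet_alg.coord)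
    show ?case
    proof (intro ext)
      fix t u
      have "tele A B G (Suc (Suc k)) t u
            = Q t u * Dt (P (Suc k)) t u + (G t u - A t u * u 2) * P (Suc k) t u
              + A t u * u (Suc (Suc (Suc k)))"
        unfolding tele.simps(3) DtT den using nz[of t u] by (simp add: DtQ IH field_simps)
      also have "\<dots> = Q t u * P (Suc (Suc k)) t u + A t u * u (Suc (Suc (Suc k)))"
        using nz[of t u] by (simp add: P_Suc lam_eq field_simps)
      finally show "tele A B G (Suc (Suc k)) t u
                      = Q t u * P (Suc (Suc k)) t u + A t u * u (Suc (Suc (Suc k)))" .
    qed
  qed
  then show ?thesis unfolding P_def .
qed

lemma annihilates_lprol_of_annihilates_tele:
  fixes A B G F :: jfun
  defines "lam \<equiv> \<lambda>t u. (G t u - A t u * u 2) / (B t u - A t u * u 1)"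
  assumes A: "jet_alg A" and B: "jet_alg B" and G: "jet_alg G"
    and nz: "\<And>t u. B t u - A t u * u 1 \<noteq> 0"
    and F: "depends_upto N F" "N < n"
    and tangent: "annihilates_on n F A (tele A B G) (eq_surface n F)"
  shows "annihilates_on n F (\<lambda>t u. 0) (lprol (\<lambda>t u. 0) (\<lambda>t u. 1) lam) (eq_surface_prol n F)"
proof -
  define Q where "Q = (\<lambda>t u. B t u - A t u * u 1)"
  define P where "P = lprol (\<lambda>t u. 0) (\<lambda>t u. 1) lam"
  have T: "tele A B G i t u = Q t u * P i t u + A t u * u (Suc i)" for i t u
    using tele_eq_lprol[OF A B G nz] unfolding Q_def P_def lam_def by simp
  have "P n t u = (\<Sum>i<n. P i t u * px i F t u)"
    if on: "u n = F t u" "u (Suc n) = Dt F t u" for t u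
  proof -
    have "tele A B G n t u = A t u * pt F t u + (\<Sum>i<n. tele A B G i t u * px i F t u)"
      using tangent on(1) unfolding annihilates_on_def eq_surface_def by auto
    moreover have "u (Suc n) = pt F t u + (\<Sum>i<n. u (Suc i) * px i F t u)"
      using on(2) Dt_eq_finite_sum[OF F] by simp
    ultimately have "Q t u * P n t u = Q t u * (\<Sum>i<n. P i t u * px i F t u)"
      unfolding T by (simp add: sum.distrib sum_distrib_left algebra_simps)
    then show ?thesis using nz unfolding Q_def by simp
  qed
  then show ?thesis
    unfolding annihilates_on_def eq_surface_prol_def P_def by auto
qed

theorem corollary2p5:
  fixes n :: nat and F :: jfun and \<alpha> \<beta> \<gamma>1 :: "real \<Rightarrow> real \<Rightarrow> real \<Rightarrow> real"
  assumes n: "n \<ge> 2"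
    and F_dep: "depends_upto (n - 1) F" and F_smooth: "jsmooth F"
    and sm: "jsmooth (lift3 \<alpha>)" "jsmooth (lift3 \<beta>)" "jsmooth (lift3 \<gamma>1)"
    and nondeg: "\<And>t x x1. \<beta> t x x1 - \<alpha> t x x1 * x1 \<noteq> 0"
    and inv: "annihilates_on n F (lift3 \<alpha>)
                (tele (lift3 \<alpha>) (lift3 \<beta>) (lift3 \<gamma>1)) (eq_surface n F)"
  shows "annihilates_on n F (\<lambda>t u. 0)
           (lprol (\<lambda>t u. 0) (\<lambda>t u. 1)
              (\<lambda>t u. (\<gamma>1 t (u 0) (u 1) - \<alpha> t (u 0) (u 1) * u 2)
                     / (\<beta> t (u 0) (u 1) - \<alpha> t (u 0) (u 1) * u 1)))
           (eq_surface_prol n F)"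
proof -
  have "jet_alg (lift3 g)" if "jsmooth (lift3 g)" for g
    using that by (rule jet_alg.smooth[of _ 1]) (simp add: depends_upto_def lift3_def)
  with sm have "jet_alg (lift3 \<alpha>)" "jet_alg (lift3 \<beta>)" "jet_alg (lift3 \<gamma>1)"
    by blast+
  from annihilates_lprol_of_annihilates_tele[OF this _ F_dep _ inv] nondeg n
  show ?thesis unfolding lift3_def by simp
qed

end
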